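(* Let $X$ be a convex subset of $\mathbb{R}^n$, $f=(f_1,\ldots,f_m):X\to\mathbb{R}^m$ a convex mapping, and $g_1,\ldots,g_\ell:X\to\mathbb{R}$ convex functions ($\ell\ge1$). Let $\Omega=\{x\in X: g_1(x)\le0,\ldots,g_\ell(x)\le0\}$. Then the following are equivalent: $(\alpha)$ $\mathrm{WE}(f|_\Omega,\Omega)=\mathrm{E}(f|_\Omega,\Omega)$; $(\beta)$ $\displaystyle\bigcup_{\emptyset\neq I\subseteq M}\mathrm{E}((f|_\Omega)_I,\Omega)\subseteq\mathrm{E}(f|_\Omega,\Omega)$, where $M=\{1,\ldots,m\}$.
   Context: A mapping $f=(f_1,\ldots,f_m)$ on a convex set is convex if each $f_i$ is a convex function. Let $M=\{1,\ldots,m\}$. For a nonempty $I\subseteq M$ and $y,y'\in\mathbb{R}^m$: $y\lneq_I y'$ means $y_i\leq y'_i$ for all $i\in I$ and $y_j<y'_j$ for some $j\in I$; $y<_I y'$ means $y_i<y'_i$ for all $i\in I$. For $Y\subseteq\mathbb{R}^m$, $\mathrm{M}_I Y$ (resp. $\mathrm{WM}_I Y$) is the set of all $y'\in Y$ for which there is no $y\in Y$ with $y\lneq_I y'$ (resp. $y<_I y'$). For a mapping $h=(h_1,\ldots,h_m):Z\to\mathbb{R}^m$ and $I=\{i_1<\cdots<i_k\}$, $h_I=(h_{i_1},\ldots,h_{i_k})$, $\mathrm{E}(h_I,Z)=h^{-1}(\mathrm{M}_I h(Z))$, $\mathrm{WE}(h_I,Z)=h^{-1}(\mathrm{WM}_I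 h(Z))$; $\mathrm{E}(h,Z)=\mathrm{E}(h_M,Z)$, $\mathrm{WE}(h,Z)=\mathrm{WE}(h_M,Z)$. $f|_\Omega$ denotes the restriction of $f$ to $\Omega$. *)

theory Defs
  imports "HOL-Analysis.Analysis"
begin

text \<open>Points of R^m are represented as functions nat => real; only the
  coordinates in the index set I matter for the orders below.\<close>

definition le_neq_on :: "nat set \<Rightarrow> (nat \<Rightarrow> real) \<Rightarrow> (nat \<Rightarrow> real) \<Rightarrow> bool" where
  "le_neq_on I y y' \<longleftrightarrow> (\<forall>i\<in>I. y i \<le> y' i) \<and> (\<exists>j\<in>I. y j < y' j)"

definition less_on :: "nat set \<Rightarrow> (nat \<Rightarrow> real) \<Rightarrow> (nat \<Rightarrow> real) \<Rightarrow> bool" where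
  "less_on I y y' \<longleftrightarrow> (\<forall>i\<in>I. y i < y' i)"

definition minimal_on :: "nat set \<Rightarrow> (nat \<Rightarrow> real) set \<Rightarrow> (nat \<Rightarrow> real) set" where
  "minimal_on I Y = {y'\<in>Y. \<not> (\<exists>y\<in>Y. le_neq_on I y y')}"

definition weak_minimal_on :: "nat set \<Rightarrow> (nat \<Rightarrow> real) set \<Rightarrow> (nat \<Rightarrow> real) set" where
  "weak_minimal_on I Y = {y'\<in>Y. \<not> (\<exists>y\<in>Y. less_on I y y')}"

definition efficient :: "nat set \<Rightarrow> ('a \<Rightarrow> nat \<Rightarrow> real) \<Rightarrow> 'a set \<Rightarrow> 'a set" where
  "efficient I h Z = {z\<in>Z. h z \<in> minimal_on I (h ` Z)}"

definition weakly_efficient :: "nat set \<Rightarrow> ('a \<Rightarrow> nat \<Rightarrow> real) \<Rightarrow> 'a set \<Rightarrow> 'a set" where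
  "weakly_efficient I h Z = {z\<in>Z. h z \<in> weak_minimal_on I (h ` Z)}"

end

theory Submission
  imports Defs
begin

text \<open>Every weakly efficient point is efficient for some nonempty subfamily of the objectives;
  hence (\<beta>) forces WE \<subseteq> E, while E \<subseteq> WE always holds. To find the subfamily, take a
  minimal index set I for which x is still weakly efficient. If some y dominated x in the
  Pareto sense on I, the set J of indices where f y ties f x would be a proper nonempty
  subset of I, so some z beats x strictly on J; a point on the segment from y towards z,
  close enough to y, then beats x strictly on all of I by convexity.\<close>

lemma efficient_iff:
  "x \<in> efficient I h Z \<longleftrightarrow>
     x \<in> Z \<and> \<not> (\<exists>y\<in>Z. (\<forall>i\<in>I. h y i \<le> h x i) \<and> (\<exists>j\<in>I. h y j < h x j))"
  unfolding efficient_def minimal_on_def le_neq_on_def by auto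

lemma weakly_efficient_iff:
  "x \<in> weakly_efficient I h Z \<longleftrightarrow> x \<in> Z \<and> \<not> (\<exists>y\<in>Z. \<forall>i\<in>I. h y i < h x i)"
  unfolding weakly_efficient_def weak_minimal_on_def less_on_def by auto

lemma efficient_subset_weakly_efficient:
  assumes "I \<noteq> {}" "I \<subseteq> K"
  shows "efficient I h Z \<subseteq> weakly_efficient K h Z"
proof
  fix x assume "x \<in> efficient I h Z"
  then show "x \<in> weakly_efficient K h Z"
    using assms unfolding efficient_iff weakly_efficient_iff by (meson less_imp_le subsetD ex_in_conv)
qed

lemma convex_sublevel_sets_Int:
  assumes "convex S" "\<forall>j\<in>J. convex_on S (g j)"
  shows "convex {x\<in>S. \<forall>j\<in>J. g j x \<le> (0::real)}"
  unfolding convex_alt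
proof (intro ballI allI impI)
  fix a b and u :: real
  assume a: "a \<in> {x\<in>S. \<forall>j\<in>J. g j x \<le> 0}" and b: "b \<in> {x\<in>S. \<forall>j\<in>J. g j x \<le> 0}"
    and u: "0 \<le> u \<and> u \<le> 1"
  have "g j ((1 - u) *\<^sub>R a + u *\<^sub>R b) \<le> 0" if "j \<in> J" for j
  proof -
    have "g j ((1 - u) *\<^sub>R a + u *\<^sub>R b) \<le> (1 - u) * g j a + u * g j b"
      using assms(2) that a b u by (intro convex_onD) auto
    moreover have "(1 - u) * g j a \<le> 0" "u * g j b \<le> 0"
      using a b u that by (auto simp: mult_nonneg_nonpos)
    ultimately show ?thesis by linarith
  qed
  moreover have "(1 - u) *\<^sub>R a + u *\<^sub>R b \<in> S"
    using assms(1) a b u by (intro convexD_alt) auto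
  ultimately show "(1 - u) *\<^sub>R a + u *\<^sub>R b \<in> {x\<in>S. \<forall>j\<in>J. g j x \<le> 0}" by blast
qed

lemma exists_small_scale_less:
  fixes a d :: "'i \<Rightarrow> real"
  assumes "finite A" "\<forall>i\<in>A. 0 < d i"
  shows "\<exists>t. 0 < t \<and> t < 1 \<and> (\<forall>i\<in>A. t * a i < d i)"
proof -
  have "\<forall>i\<in>A. eventually (\<lambda>t. t * a i < d i) (at_right (0::real))"
  proof
    fix i assume "i \<in> A"
    moreover have "((\<lambda>t::real. t * a i) \<longlongrightarrow> 0 * a i) (at_right 0)"
      by (intro tendsto_intros)
    ultimately show "eventually (\<lambda>t. t * a i < d i) (at_right (0::real))"
      using assms(2) by (auto dest: order_tendstoD(2))
  qed
  then have "eventually (\<lambda>t. \<forall>i\<in>A. t * a i < d i) (at_right (0::real))"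
    using assms(1) by (rule eventually_ball_finite[rotated])
  moreover have "eventually (\<lambda>t::real. 0 < t \<and> t < 1) (at_right 0)"
    using eventually_at_right_real[of 0 1] by simp
  ultimately have "eventually (\<lambda>t. 0 < t \<and> t < 1 \<and> (\<forall>i\<in>A. t * a i < d i)) (at_right (0::real))"
    by eventually_elim auto
  then show ?thesis
    using eventually_happens trivial_limit_at_right_real by blast
qed

lemma weakly_efficient_proper_subfamily:
  fixes f :: "nat \<Rightarrow> 'a::real_vector \<Rightarrow> real"
  assumes "convex S" and "\<forall>i\<in>I. convex_on S (f i)" and "finite I"
    and x: "x \<in> weakly_efficient I (\<lambda>x i. f i x) S" and "x \<notin> efficient I (\<lambda>x i. f i x) S"
  obtains J where "J \<noteq> {}" "J \<subset> I" "x \<in> weakly_efficient J (\<lambda>x i. f i x) S"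
proof -
  have xS: "x \<in> S" and no_strict: "\<not> (\<exists>y\<in>S. \<forall>i\<in>I. f i y < f i x)"
    using x by (auto simp: weakly_efficient_iff)
  obtain y j where yS: "y \<in> S" and y_le: "\<forall>i\<in>I. f i y \<le> f i x" and "j \<in> I" "f j y < f j x"
    using assms(5) xS by (auto simp: efficient_iff)
  define J where "J = {i\<in>I. f i y = f i x}"
  have "J \<noteq> {}"
    using no_strict yS y_le by (force simp: J_def)
  moreover have "J \<subset> I"
  proof -
    have "j \<notin> J" using \<open>f j y < f j x\<close> by (simp add: J_def)
    then show ?thesis using \<open>j \<in> I\<close> by (auto simp: J_def)
  qed
  moreover have "x \<in> weakly_efficient J (\<lambda>x i. f i x) S"
  proof (rule ccontr)
    assume "x \<notin> weakly_efficient J (\<lambda>x i. f i x) S"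
    then obtain z where zS: "z \<in> S" and z_less: "\<forall>i\<in>J. f i z < f i x"
      using xS by (auto simp: weakly_efficient_iff)
    obtain t where t: "0 < t" "t < 1" and t_small: "\<forall>i\<in>I - J. t * (f i z - f i y) < f i x - f i y"
      using exists_small_scale_less[of "I - J" "\<lambda>i. f i x - f i y" "\<lambda>i. f i z - f i y"]
        \<open>finite I\<close> y_le by (force simp: J_def)
    define w where "w = (1 - t) *\<^sub>R y + t *\<^sub>R z"
    have "w \<in> S"
      unfolding w_def using assms(1) yS zS t by (intro convexD_alt) auto
    moreover have "f i w < f i x" if "i \<in> I" for i
    proof -
      have "f i w \<le> (1 - t) * f i y + t * f i z"
        unfolding w_def using assms(2) that yS zS t by (intro convex_onD) auto
      moreover have "t * (f i z - f i y) < f i x - f i y"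
      proof (cases "i \<in> J")
        case True
        then have "f i y = f i x" "f i z < f i x" using z_less by (auto simp: J_def)
        then show ?thesis using t(1) by (simp add: mult_pos_neg)
      next
        case False
        then show ?thesis using t_small that by blast
      qed
      ultimately show ?thesis by (simp add: algebra_simps)
    qed
    ultimately show False using no_strict by blast
  qed
  ultimately show thesis by (rule that)
qed

lemma weakly_efficient_imp_efficient_subfamily:
  fixes f :: "nat \<Rightarrow> 'a::real_vector \<Rightarrow> real"
  assumes "convex S" and "\<forall>i\<in>K. convex_on S (f i)" and "finite K" and "K \<noteq> {}"
    and "x \<in> weakly_efficient K (\<lambda>x i. f i x) S"
  shows "\<exists>I. I \<noteq> {} \<and> I \<subseteq> K \<and> x \<in> efficient I (\<lambda>x i. f i x) S"
  using assms(3-5) assms(2)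
proof (induction K rule: finite_psubset_induct)
  case (psubset K)
  show ?case
  proof (cases "x \<in> efficient K (\<lambda>x i. f i x) S")
    case True
    then show ?thesis using psubset.prems by blast
  next
    case False
    then obtain J where J: "J \<noteq> {}" "J \<subset> K" "x \<in> weakly_efficient J (\<lambda>x i. f i x) S"
      using weakly_efficient_proper_subfamily[OF assms(1) psubset.prems(3) psubset.hyps
          psubset.prems(2)] by blast
    have "\<forall>i\<in>J. convex_on S (f i)"
      using J(2) psubset.prems(3) by blast
    then obtain I where "I \<noteq> {}" "I \<subseteq> J" "x \<in> efficient I (\<lambda>x i. f i x) S"
      using psubset.IH[OF J(2,1,3)] by blast
    then show ?thesis using J(2) by blast
  qed
qed

theorem corollary6p3:
  fixes X :: "(real ^ 'n) set"
    and m l :: nat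
    and f :: "nat \<Rightarrow> real ^ 'n \<Rightarrow> real"
    and g :: "nat \<Rightarrow> real ^ 'n \<Rightarrow> real"
    and \<Omega> :: "(real ^ 'n) set"
  assumes "convex X"
    and "m \<ge> 1"
    and "\<forall>i\<in>{1..m}. convex_on X (f i)"
    and "l \<ge> 1"
    and "\<forall>j\<in>{1..l}. convex_on X (g j)"
    and "\<Omega> = {x\<in>X. \<forall>j\<in>{1..l}. g j x \<le> 0}"
  shows "weakly_efficient {1..m} (\<lambda>x i. f i x) \<Omega> = efficient {1..m} (\<lambda>x i. f i x) \<Omega>
     \<longleftrightarrow> (\<Union>I\<in>{I. I \<noteq> {} \<and> I \<subseteq> {1..m}}. efficient I (\<lambda>x i. f i x) \<Omega>)
           \<subseteq> efficient {1..m} (\<lambda>x i. f i x) \<Omega>"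
proof -
  let ?h = "\<lambda>x i. f i x" and ?U = "\<Union>I\<in>{I. I \<noteq> {} \<and> I \<subseteq> {1..m}}. efficient I (\<lambda>x i. f i x) \<Omega>"
  have "convex \<Omega>"
    using convex_sublevel_sets_Int[OF assms(1,5)] assms(6) by simp
  moreover have "\<forall>i\<in>{1..m}. convex_on \<Omega> (f i)"
    using assms(3,6) convex_on_subset[of X _ \<Omega>] \<open>convex \<Omega>\<close> by auto
  ultimately have "weakly_efficient {1..m} ?h \<Omega> \<subseteq> ?U"
    using weakly_efficient_imp_efficient_subfamily[of \<Omega> "{1..m}" f] assms(2)
    by (simp add: subset_iff)
  moreover have "?U \<subseteq> weakly_efficient {1..m} ?h \<Omega>"
    by (intro UN_least efficient_subset_weakly_efficient) auto
  ultimately have "weakly_efficient {1..m} ?h \<Omega> = ?U"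
    by (rule subset_antisym)
  moreover have "efficient {1..m} ?h \<Omega> \<subseteq> ?U"
    using assms(2) by (intro UN_upper) simp
  ultimately show ?thesis
    by (metis subset_antisym order_refl)
qed

end
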